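(* In the $n$-manager setting described in the context, fix $i$ and suppose all managers $j\neq i$ invest according to constant (deterministic, time-independent) strategies $\pi^j\in\mathbb{R}$, and that the forward relative performance $U^i$ of manager $i$ has constant local risk tolerance $r^i(x,t):=-U^i_x(x,t)/U^i_{xx}(x,t)\equiv r^i$. Then the best-response strategy \[ \pi^{i,*}_t=\frac{1}{\nu_i^2+\sigma_i^2}\Big(\theta_i\sigma_i\overline{(\pi\sigma)}^{(-i)}_t-\mu_i\frac{U^i_x(\widehat X^{i,*}_t,t)}{U^i_{xx}(\widehat X^{i,*}_t,t)}\Big) \] is constant in time.
   Context: Market: independent Brownian motions $B,W^1,\dots,W^n$; stock $i$ satisfies $dS^i_t/S^i_t=\mu_i dt+\nu_i dW^i_t+\sigma_i dB_t$ with constants $\mu_i>0$, $\sigma_i,\nu_i\ge0$, $\sigma_i+\nu_i>0$. Manager $i$ invests amount $\pi^i$ in stock $i$, wealth $dX^i_t=\pi^i_t(\mu_i dt+\nu_i dW^i_t+\sigma_i dB_t)$, competition weight $\theta_i\in[0,1]$, relative performance metric $\widehat X^i=X^i-\theta_i\frac1{n-1}\sum_{k\ne i}X^k$; $\widehat X^{i,*}$ denotes this metric when $i$ uses $\pi^{i,*}$. $\overline{(\pi\sigma)}^{(-i)}_t=\frac1{n-1}\sum_{k\neq i}\pi^k_t\sigma_k$. $U^i(x,t)$ is a smooth forward relative performance for manager $i$ (a random field, a.s. strictly increasing and strictly concave in $x$, such that $U^i(\widehat X^i_t,t)$ is a local supermartingale for all admissible $\pi^i$ and a local martingale for the optimal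 one), with $dU^i(x,t)=U^i_t(x,t)dt$. *)

theory Defs
  imports "HOL-Analysis.Analysis"
begin

text \<open>A (pathwise) random field U(x,t): for a fixed sample point it is a function of
  the wealth variable x and time t. Partial derivatives in x.\<close>

definition Ux :: "(real \<Rightarrow> real \<Rightarrow> real) \<Rightarrow> real \<Rightarrow> real \<Rightarrow> real" where
  "Ux U x t = deriv (\<lambda>y. U y t) x"

definition Uxx :: "(real \<Rightarrow> real \<Rightarrow> real) \<Rightarrow> real \<Rightarrow> real \<Rightarrow> real" where
  "Uxx U x t = deriv (\<lambda>y. Ux U y t) x"

definition avg_pisigma :: "nat \<Rightarrow> nat \<Rightarrow> (nat \<Rightarrow> real) \<Rightarrow> (nat \<Rightarrow> real) \<Rightarrow> real" where
  "avg_pisigma n i p sg = (\<Sum>k\<in>{..<n} - {i}. p k * sg k) / (real n - 1)"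

text \<open>The best-response formula of manager i at time t, given the other managers'
  (constant) strategies p, the forward relative performance U (one sample path) and
  the path Xh of the optimal relative performance metric.\<close>
definition best_response ::
  "(nat \<Rightarrow> real) \<Rightarrow> (nat \<Rightarrow> real) \<Rightarrow> (nat \<Rightarrow> real) \<Rightarrow> (nat \<Rightarrow> real) \<Rightarrow> nat \<Rightarrow> nat
    \<Rightarrow> (nat \<Rightarrow> real) \<Rightarrow> (real \<Rightarrow> real \<Rightarrow> real) \<Rightarrow> (real \<Rightarrow> real) \<Rightarrow> real \<Rightarrow> real" where
  "best_response mu nu sg theta n i p U Xh t =
     (theta i * sg i * avg_pisigma n i p sg
        - mu i * Ux U (Xh t) t / Uxx U (Xh t) t) / ((nu i)\<^sup>2 + (sg i)\<^sup>2)"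

end

theory Submission
  imports Defs
begin

definition risk_tolerance :: "(real \<Rightarrow> real \<Rightarrow> real) \<Rightarrow> real \<Rightarrow> real \<Rightarrow> real" where
  "risk_tolerance U x t = - Ux U x t / Uxx U x t"

lemma best_response_eq_risk_tolerance:
  "best_response mu nu sg theta n i p U Xh t =
     (theta i * sg i * avg_pisigma n i p sg + mu i * risk_tolerance U (Xh t) t)
       / ((nu i)\<^sup>2 + (sg i)\<^sup>2)"
  by (simp add: best_response_def risk_tolerance_def)

theorem corollary1:
  fixes n i :: nat
    and mu nu sg theta :: "nat \<Rightarrow> real"
    and p :: "nat \<Rightarrow> real"
    and U :: "'w \<Rightarrow> real \<Rightarrow> real \<Rightarrow> real"
    and Xh :: "'w \<Rightarrow> real \<Rightarrow> real"
    and r :: real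
  assumes "n \<ge> 2" and "i < n"
    and "\<And>k. k < n \<Longrightarrow> mu k > 0"
    and "\<And>k. k < n \<Longrightarrow> sg k \<ge> 0"
    and "\<And>k. k < n \<Longrightarrow> nu k \<ge> 0"
    and "\<And>k. k < n \<Longrightarrow> sg k + nu k > 0"
    and "\<And>k. k < n \<Longrightarrow> 0 \<le> theta k \<and> theta k \<le> 1"
    and "\<And>w x t. t \<ge> 0 \<Longrightarrow> (\<lambda>y. U w y t) differentiable (at x)"
    and "\<And>w x t. t \<ge> 0 \<Longrightarrow> (\<lambda>y. Ux (U w) y t) differentiable (at x)"
    and "\<And>w x t. t \<ge> 0 \<Longrightarrow> Ux (U w) x t > 0"
    and "\<And>w x t. t \<ge> 0 \<Longrightarrow> Uxx (U w) x t < 0"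
    and "\<And>w x t. t \<ge> 0 \<Longrightarrow> - Ux (U w) x t / Uxx (U w) x t = r"
  shows "\<exists>c. \<forall>w t. t \<ge> 0 \<longrightarrow> best_response mu nu sg theta n i p (U w) (Xh w) t = c"
proof (intro exI allI impI)
  fix w and t :: real
  assume "t \<ge> 0"
  then have "risk_tolerance (U w) (Xh w t) t = r"
    using assms(12) by (simp add: risk_tolerance_def)
  then show "best_response mu nu sg theta n i p (U w) (Xh w) t =
      (theta i * sg i * avg_pisigma n i p sg + mu i * r) / ((nu i)\<^sup>2 + (sg i)\<^sup>2)"
    by (simp add: best_response_eq_risk_tolerance)
qed

end
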